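(* Let $R$ be an integral domain satisfying (R$_1$), and let $S$ be an overring of $R$ such that $R \subseteq S$ satisfies going-down. Then $S$ satisfies (R$_1$), every height one prime of $S$ contracts to a height one prime of $R$, and contraction $Q \mapsto Q \cap R$ gives an injective map $\operatorname{Spec}^1(S) \to \operatorname{Spec}^1(R)$ whose image is exactly the set of height one primes $\mathfrak{p}$ of $R$ with $\mathfrak{p}S \neq S$.
   Context: All rings are commutative with identity; an overring of a domain $R$ is a ring between $R$ and its fraction field. A ring extension $A \subseteq B$ satisfies going-down if whenever $\mathfrak{p} \subset \mathfrak{q}$ are primes of $A$ and $Q$ is a prime of $B$ with $Q \cap A = \mathfrak{q}$, there is a prime $P \subseteq Q$ of $B$ with $P \cap A = \mathfrak{p}$. A ring satisfies (R$_1$) if its localization at every height one prime is a valuation domain. $\operatorname{Spec}^1(A)$ denotes the set of height one primes of $A$. *)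

theory Defs
  imports Main
begin

text \<open>Integral domains are modelled as subrings of an ambient field 'k
(every subring of a field is a domain, and every domain embeds in its fraction field).\<close>

definition subring :: "'k::field set \<Rightarrow> bool" where
  "subring A \<longleftrightarrow> 0 \<in> A \<and> 1 \<in> A \<and>
     (\<forall>x\<in>A. \<forall>y\<in>A. x + y \<in> A \<and> x - y \<in> A \<and> x * y \<in> A)"

definition frac_field :: "'k::field set \<Rightarrow> 'k set" where
  "frac_field A = {a / b | a b. a \<in> A \<and> b \<in> A \<and> b \<noteq> 0}"

definition overring :: "'k::field set \<Rightarrow> 'k set \<Rightarrow> bool" where
  "overring R S \<longleftrightarrow> subring R \<and> subring S \<and> R \<subseteq> S \<and> S \<subseteq> frac_field R"

definition ideal_of :: "'k::field set \<Rightarrow> 'k set \<Rightarrow> bool" where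
  "ideal_of A I \<longleftrightarrow> I \<subseteq> A \<and> 0 \<in> I \<and>
     (\<forall>x\<in>I. \<forall>y\<in>I. x + y \<in> I \<and> x - y \<in> I) \<and> (\<forall>a\<in>A. \<forall>x\<in>I. a * x \<in> I)"

definition prime_of :: "'k::field set \<Rightarrow> 'k set \<Rightarrow> bool" where
  "prime_of A P \<longleftrightarrow> ideal_of A P \<and> P \<noteq> A \<and>
     (\<forall>a\<in>A. \<forall>b\<in>A. a * b \<in> P \<longrightarrow> a \<in> P \<or> b \<in> P)"

text \<open>Height one prime of a domain: a nonzero prime with no nonzero prime strictly below it
(in a domain (0) is prime, so this says exactly that the longest chain of primes ending at P
has length one).\<close>
definition height_one_prime :: "'k::field set \<Rightarrow> 'k set \<Rightarrow> bool" where
  "height_one_prime A P \<longleftrightarrow> prime_of A P \<and> P \<noteq> {0} \<and>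
     (\<forall>Q. prime_of A Q \<and> Q \<subseteq> P \<and> Q \<noteq> {0} \<longrightarrow> Q = P)"

definition Spec1 :: "'k::field set \<Rightarrow> 'k set set" where
  "Spec1 A = {P. height_one_prime A P}"

definition localization :: "'k::field set \<Rightarrow> 'k set \<Rightarrow> 'k set" where
  "localization A P = {a / s | a s. a \<in> A \<and> s \<in> A - P}"

definition valuation_domain :: "'k::field set \<Rightarrow> bool" where
  "valuation_domain V \<longleftrightarrow> subring V \<and>
     (\<forall>x\<in>frac_field V. x \<noteq> 0 \<longrightarrow> x \<in> V \<or> inverse x \<in> V)"

definition R1 :: "'k::field set \<Rightarrow> bool" where
  "R1 A \<longleftrightarrow> (\<forall>P. height_one_prime A P \<longrightarrow> valuation_domain (localization A P))"

definition going_down :: "'k::field set \<Rightarrow> 'k set \<Rightarrow> bool" where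
  "going_down A B \<longleftrightarrow> (\<forall>p q Q. prime_of A p \<and> prime_of A q \<and> p \<subseteq> q \<and>
      prime_of B Q \<and> Q \<inter> A = q \<longrightarrow> (\<exists>P. prime_of B P \<and> P \<subseteq> Q \<and> P \<inter> A = p))"

text \<open>Ideal of B generated by X (used for the extended ideal pS).\<close>
definition gen_ideal :: "'k::field set \<Rightarrow> 'k set \<Rightarrow> 'k set" where
  "gen_ideal B X = \<Inter>{I. ideal_of B I \<and> X \<subseteq> I}"

end

theory Submission imports Defs begin

text \<open>Let \<open>Q\<close> be a prime of \<open>S\<close> whose contraction \<open>p = Q \<inter> R\<close> has height one. Since \<open>R\<^sub>p\<close> is a
valuation domain, every \<open>x \<in> S\<close> has \<open>x\<close> or \<open>x\<inverse>\<close> in \<open>R\<^sub>p\<close>, and primality of \<open>Q\<close> forces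
\<open>Q = pR\<^sub>p \<inter> S\<close>: such a prime is determined by its contraction, and every nonzero prime inside it
has the same contraction, so it has height one. Conversely going-down makes the contraction of a
height one prime of \<open>S\<close> a height one prime of \<open>R\<close>, and lifts a height one \<open>p\<close> with \<open>pS \<noteq> S\<close>
below a prime containing \<open>pS\<close>. Finally \<open>R\<^sub>p \<subseteq> S\<^sub>Q\<close> with the same fraction field, so \<open>S\<^sub>Q\<close> is a
valuation domain.\<close>

lemma subring_closed:
  assumes "subring A" "x \<in> A" "y \<in> A"
  shows "x + y \<in> A" "x - y \<in> A" "x * y \<in> A"
  using assms unfolding subring_def by auto

lemma subring_0_1:
  assumes "subring A"
  shows "0 \<in> A" "1 \<in> A"
  using assms unfolding subring_def by auto

lemma ideal_of_mult: "ideal_of A I \<Longrightarrow> a \<in> A \<Longrightarrow> x \<in> I \<Longrightarrow> a * x \<in> I"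
  unfolding ideal_of_def by auto

lemma ideal_of_add: "ideal_of A I \<Longrightarrow> x \<in> I \<Longrightarrow> y \<in> I \<Longrightarrow> x + y \<in> I"
  unfolding ideal_of_def by auto

lemma ideal_of_subset: "ideal_of A I \<Longrightarrow> I \<subseteq> A"
  unfolding ideal_of_def by auto

lemma ideal_of_0: "ideal_of A I \<Longrightarrow> 0 \<in> I"
  unfolding ideal_of_def by auto

lemma ideal_of_eq_if_one_mem:
  assumes "ideal_of A I" "1 \<in> I"
  shows "I = A"
  using ideal_of_mult[OF assms(1) _ assms(2)] ideal_of_subset[OF assms(1)] by fastforce

lemma ideal_of_whole:
  assumes "subring A"
  shows "ideal_of A A"
  using subring_0_1[OF assms] subring_closed[OF assms] unfolding ideal_of_def by simp

lemma prime_of_ideal: "prime_of A P \<Longrightarrow> ideal_of A P"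
  unfolding prime_of_def by blast

lemma prime_of_0: "prime_of A P \<Longrightarrow> 0 \<in> P"
  unfolding prime_of_def ideal_of_def by auto

lemma prime_of_one_notin:
  assumes "subring A" "prime_of A P"
  shows "1 \<notin> P"
  using ideal_of_eq_if_one_mem[OF prime_of_ideal] assms unfolding prime_of_def by blast

lemma prime_of_mult_notin:
  assumes "prime_of A P" "s \<in> A" "t \<in> A" "s \<notin> P" "t \<notin> P"
  shows "s * t \<notin> P"
  using assms unfolding prime_of_def by blast

subsection \<open>Fraction fields and localizations\<close>

lemma frac_field_mono: "A \<subseteq> B \<Longrightarrow> frac_field A \<subseteq> frac_field B"
  unfolding frac_field_def by blast

lemma subset_frac_field:
  assumes "subring A"
  shows "A \<subseteq> frac_field A"
proof
  fix x assume "x \<in> A"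
  then have "x = x / 1 \<and> x \<in> A \<and> 1 \<in> A \<and> (1::'a) \<noteq> 0" using subring_0_1[OF assms] by simp
  then show "x \<in> frac_field A" unfolding frac_field_def by blast
qed

lemma frac_field_divide_closed:
  assumes R: "subring R" and x: "x \<in> frac_field R" and y: "y \<in> frac_field R"
  shows "x / y \<in> frac_field R"
proof -
  obtain a b where ab: "x = a / b" "a \<in> R" "b \<in> R" "b \<noteq> 0"
    using x unfolding frac_field_def by auto
  obtain c d where cd: "y = c / d" "c \<in> R" "d \<in> R" "d \<noteq> 0"
    using y unfolding frac_field_def by auto
  show ?thesis
  proof (cases "c = 0")
    case True
    then show ?thesis using cd(1) subset_frac_field[OF R] subring_0_1[OF R] by auto
  next
    case False
    have "x / y = (a * d) / (b * c)" unfolding ab(1) cd(1) using ab(4) cd(4) False by simp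
    moreover have "a * d \<in> R" "b * c \<in> R" "b * c \<noteq> 0"
      using ab cd False subring_closed[OF R] by auto
    ultimately show ?thesis unfolding frac_field_def by blast
  qed
qed

lemma frac_field_subset_frac_field:
  assumes "subring R" "A \<subseteq> frac_field R"
  shows "frac_field A \<subseteq> frac_field R"
proof
  fix x assume "x \<in> frac_field A"
  then obtain a b where "x = a / b" "a \<in> A" "b \<in> A" unfolding frac_field_def by blast
  then show "x \<in> frac_field R" using frac_field_divide_closed[OF assms(1)] assms(2) by blast
qed

lemma localization_subset_frac_field:
  assumes "prime_of A P"
  shows "localization A P \<subseteq> frac_field A"
proof
  fix x assume "x \<in> localization A P"
  then obtain a s where "x = a / s" "a \<in> A" "s \<in> A" "s \<notin> P" unfolding localization_def by blast
  moreover have "s \<noteq> 0" using calculation(4) prime_of_0[OF assms] by blast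
  ultimately show "x \<in> frac_field A" unfolding frac_field_def by blast
qed

lemma subset_localization:
  assumes A: "subring A" and P: "prime_of A P"
  shows "A \<subseteq> localization A P"
proof
  fix x assume "x \<in> A"
  then have "x = x / 1 \<and> x \<in> A \<and> 1 \<in> A - P"
    using subring_0_1[OF A] prime_of_one_notin[OF A P] by simp
  then show "x \<in> localization A P" unfolding localization_def by blast
qed

lemma localization_mono:
  assumes "R \<subseteq> S" "Q \<inter> R = p"
  shows "localization R p \<subseteq> localization S Q"
  using assms unfolding localization_def by blast

lemma subring_localization:
  assumes A: "subring A" and P: "prime_of A P"
  shows "subring (localization A P)"
proof -
  have closed: "x + y \<in> localization A P \<and> x - y \<in> localization A P \<and> x * y \<in> localization A P"
    if x: "x \<in> localization A P" and y: "y \<in> localization A P" for x y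
  proof -
    obtain a s where as: "x = a / s" "a \<in> A" "s \<in> A" "s \<notin> P"
      using x unfolding localization_def by auto
    obtain b t where bt: "y = b / t" "b \<in> A" "t \<in> A" "t \<notin> P"
      using y unfolding localization_def by auto
    have "s \<noteq> 0" "t \<noteq> 0" using as bt prime_of_0[OF P] by auto
    then have "x + y = (a * t + b * s) / (s * t)" "x - y = (a * t - b * s) / (s * t)"
      "x * y = (a * b) / (s * t)"
      unfolding as(1) bt(1) by (simp_all add: divide_simps)
    moreover have "s * t \<in> A - P"
      using prime_of_mult_notin[OF P] subring_closed[OF A] as bt by auto
    moreover have "a * t + b * s \<in> A" "a * t - b * s \<in> A" "a * b \<in> A"
      using as bt subring_closed[OF A] by auto
    ultimately show ?thesis unfolding localization_def by blast
  qed
  then show ?thesis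
    using subset_localization[OF A P] subring_0_1[OF A] unfolding subring_def by blast
qed

lemma valuation_domain_overring:
  assumes "valuation_domain V" "subring W" "V \<subseteq> W" "frac_field W \<subseteq> frac_field V"
  shows "valuation_domain W"
  using assms unfolding valuation_domain_def by blast

lemma R1_valuation_localization:
  assumes R: "subring R" and "R1 R" and p: "height_one_prime R p"
    and x: "x \<in> frac_field R" "x \<noteq> 0"
  shows "x \<in> localization R p \<or> inverse x \<in> localization R p"
proof -
  have "prime_of R p" using p unfolding height_one_prime_def by blast
  then have "x \<in> frac_field (localization R p)"
    using frac_field_mono[OF subset_localization[OF R]] x by blast
  moreover have "valuation_domain (localization R p)" using assms unfolding R1_def by blast
  ultimately show ?thesis using x unfolding valuation_domain_def by blast
qed

subsection \<open>Contraction of primes to a subring\<close>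

lemma prime_of_contraction:
  assumes R: "subring R" and S: "subring S" and RS: "R \<subseteq> S" and Q: "prime_of S Q"
  shows "prime_of R (Q \<inter> R)"
proof -
  have I: "ideal_of S Q" using prime_of_ideal[OF Q] .
  have "ideal_of R (Q \<inter> R)"
    using I subring_0_1[OF R] subring_closed[OF R] RS
    unfolding ideal_of_def by (auto simp: subset_iff)
  moreover have "Q \<inter> R \<noteq> R" using prime_of_one_notin[OF S Q] subring_0_1[OF R] by blast
  ultimately show ?thesis using Q RS unfolding prime_of_def by blast
qed

lemma contraction_nonzero:
  assumes ov: "overring R S" and Q: "prime_of S Q" and "Q \<noteq> {0}"
  shows "Q \<inter> R \<noteq> {0}"
proof -
  obtain x where x: "x \<in> Q" "x \<noteq> 0" using assms prime_of_0 by blast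
  then have "x \<in> frac_field R"
    using ideal_of_subset[OF prime_of_ideal[OF Q]] ov unfolding overring_def by blast
  then obtain a b where ab: "x = a / b" "a \<in> R" "b \<in> R" "b \<noteq> 0"
    unfolding frac_field_def by auto
  have "a = b * x" using ab by simp
  also have "\<dots> \<in> Q" using ideal_of_mult[OF prime_of_ideal[OF Q] _ x(1)] ab(3) ov
    unfolding overring_def by blast
  finally show ?thesis using ab x by auto
qed

text \<open>With \<open>p = Q \<inter> R\<close> this says \<open>Q = pR\<^sub>p \<inter> S\<close>.\<close>

lemma prime_eq_localized_contraction:
  assumes R: "subring R" and "R1 R" and ov: "overring R S"
    and Q: "prime_of S Q" and p: "height_one_prime R (Q \<inter> R)"
  shows "Q = {x \<in> S. \<exists>a t. x = a / t \<and> a \<in> Q \<inter> R \<and> t \<in> R - Q \<inter> R}" (is "Q = ?E")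
proof -
  have S: "subring S" and RS: "R \<subseteq> S" and SK: "S \<subseteq> frac_field R"
    using ov unfolding overring_def by auto
  have I: "ideal_of S Q" using prime_of_ideal[OF Q] .
  have one: "1 \<in> R - Q \<inter> R" using subring_0_1[OF R] prime_of_one_notin[OF S Q] by blast
  show ?thesis
  proof (intro equalityI subsetI)
    fix x assume xQ: "x \<in> Q"
    have xS: "x \<in> S" using xQ ideal_of_subset[OF I] by blast
    show "x \<in> ?E"
    proof (cases "x = 0")
      case True
      then have "x = 0 / 1 \<and> 0 \<in> Q \<inter> R \<and> 1 \<in> R - Q \<inter> R"
        using xQ one subring_0_1[OF R] by simp
      then show ?thesis using xS by blast
    next
      case False
      have "x \<in> frac_field R" using xS SK by blast
      from R1_valuation_localization[OF R \<open>R1 R\<close> p this False] show ?thesis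
      proof
        assume "x \<in> localization R (Q \<inter> R)"
        then obtain a t where at: "x = a / t" "a \<in> R" "t \<in> R - Q \<inter> R"
          unfolding localization_def by auto
        have "t \<noteq> 0" using at(3) prime_of_0[OF Q] by blast
        then have "a = t * x" using at(1) by simp
        also have "\<dots> \<in> Q" using ideal_of_mult[OF I _ xQ] at(3) RS by blast
        finally show ?thesis using xS at by blast
      next
        assume "inverse x \<in> localization R (Q \<inter> R)"
        then obtain a t where at: "inverse x = a / t" "a \<in> R" "t \<in> R - Q \<inter> R"
          unfolding localization_def by auto
        have "t \<noteq> 0" using at(3) prime_of_0[OF Q] by blast
        then have "t = a * x" using at(1) False by (simp add: field_simps)
        also have "\<dots> \<in> Q" using ideal_of_mult[OF I _ xQ] at(2) RS by blast
        finally show ?thesis using at(3) by blast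
      qed
    qed
  next
    fix x assume "x \<in> ?E"
    then obtain a t where at: "x \<in> S" "x = a / t" "a \<in> Q" "t \<in> R" "t \<notin> Q" by blast
    have "t \<noteq> 0" using at(5) prime_of_0[OF Q] by blast
    then have "x * t \<in> Q" using at(2,3) by simp
    moreover have "t \<in> S" using at(4) RS by blast
    ultimately show "x \<in> Q" using Q at(1,5) unfolding prime_of_def by blast
  qed
qed

lemma prime_eq_if_height_one_contraction_eq:
  assumes "subring R" "R1 R" "overring R S" "prime_of S Q" "prime_of S Q'"
    and "height_one_prime R (Q \<inter> R)" "Q \<inter> R = Q' \<inter> R"
  shows "Q = Q'"
  using prime_eq_localized_contraction[of R S Q] prime_eq_localized_contraction[of R S Q'] assms
  by simp

lemma height_one_prime_if_height_one_contraction: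
  assumes R: "subring R" and "R1 R" and ov: "overring R S"
    and Q: "prime_of S Q" and p: "height_one_prime R (Q \<inter> R)"
  shows "height_one_prime S Q"
proof -
  have S: "subring S" and RS: "R \<subseteq> S" using ov unfolding overring_def by auto
  have p0: "Q \<inter> R \<noteq> {0}"
    and pmin: "\<And>p'. prime_of R p' \<Longrightarrow> p' \<subseteq> Q \<inter> R \<Longrightarrow> p' \<noteq> {0} \<Longrightarrow> p' = Q \<inter> R"
    using p unfolding height_one_prime_def by auto
  have "Q \<noteq> {0}" using p0 subring_0_1(1)[OF R] by auto
  moreover have "Q' = Q" if Q': "prime_of S Q'" "Q' \<subseteq> Q" "Q' \<noteq> {0}" for Q'
  proof -
    have "Q' \<inter> R = Q \<inter> R"
      using pmin prime_of_contraction[OF R S RS Q'(1)] contraction_nonzero[OF ov Q'(1,3)] Q'(2)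
      by blast
    then show ?thesis
      using prime_eq_if_height_one_contraction_eq[OF R \<open>R1 R\<close> ov Q'(1) Q] p by simp
  qed
  ultimately show ?thesis using Q unfolding height_one_prime_def by blast
qed

lemma height_one_contraction_if_going_down:
  assumes R: "subring R" and ov: "overring R S" and gd: "going_down R S"
    and Q: "height_one_prime S Q"
  shows "height_one_prime R (Q \<inter> R)"
proof -
  have S: "subring S" and RS: "R \<subseteq> S" using ov unfolding overring_def by auto
  have Qp: "prime_of S Q" and Q0: "Q \<noteq> {0}"
    and Qmin: "\<And>P. prime_of S P \<Longrightarrow> P \<subseteq> Q \<Longrightarrow> P \<noteq> {0} \<Longrightarrow> P = Q"
    using Q unfolding height_one_prime_def by auto
  have q: "prime_of R (Q \<inter> R)" using prime_of_contraction[OF R S RS Qp] .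
  have "p = Q \<inter> R" if p: "prime_of R p" "p \<subseteq> Q \<inter> R" "p \<noteq> {0}" for p
  proof -
    obtain P where P: "prime_of S P" "P \<subseteq> Q" "P \<inter> R = p"
      using gd p q Qp unfolding going_down_def by blast
    have "P \<noteq> {0}" using P(3) p(3) prime_of_0[OF p(1)] by blast
    then show ?thesis using Qmin P by blast
  qed
  then show ?thesis
    unfolding height_one_prime_def using q contraction_nonzero[OF ov Qp Q0] by blast
qed

lemma valuation_localization_if_height_one_contraction:
  assumes R: "subring R" and "R1 R" and ov: "overring R S"
    and Q: "prime_of S Q" and p: "height_one_prime R (Q \<inter> R)"
  shows "valuation_domain (localization S Q)"
proof (rule valuation_domain_overring)
  have S: "subring S" and RS: "R \<subseteq> S" and SK: "S \<subseteq> frac_field R"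
    using ov unfolding overring_def by auto
  have "prime_of R (Q \<inter> R)" using p unfolding height_one_prime_def by blast
  show "valuation_domain (localization R (Q \<inter> R))"
    using \<open>R1 R\<close> p unfolding R1_def by blast
  show "subring (localization S Q)" using subring_localization[OF S Q] .
  show "localization R (Q \<inter> R) \<subseteq> localization S Q" using localization_mono[OF RS] by blast
  have "localization S Q \<subseteq> frac_field R"
    using localization_subset_frac_field[OF Q] frac_field_subset_frac_field[OF R SK] by blast
  then have "frac_field (localization S Q) \<subseteq> frac_field R"
    using frac_field_subset_frac_field[OF R] by blast
  also have "\<dots> \<subseteq> frac_field (localization R (Q \<inter> R))"
    using frac_field_mono[OF subset_localization[OF R \<open>prime_of R (Q \<inter> R)\<close>]] .
  finally show "frac_field (localization S Q) \<subseteq> frac_field (localization R (Q \<inter> R))" .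
qed

subsection \<open>Proper ideals lie in primes\<close>

lemma ideal_of_adjoin:
  assumes S: "subring S" and M: "ideal_of S M" and a: "a \<in> S"
  shows "ideal_of S {m + a * s | m s. m \<in> M \<and> s \<in> S}" (is "ideal_of S ?J")
  unfolding ideal_of_def
proof (intro conjI ballI)
  show "?J \<subseteq> S" using ideal_of_subset[OF M] a subring_closed[OF S] by blast
  have "(0::'a) = 0 + a * 0" by simp
  then show "0 \<in> ?J" using ideal_of_0[OF M] subring_0_1[OF S] by blast
next
  fix x y assume "x \<in> ?J" "y \<in> ?J"
  then obtain m s m' s' where ms: "x = m + a * s" "m \<in> M" "s \<in> S" "y = m' + a * s'" "m' \<in> M" "s' \<in> S"
    by blast
  have "x + y = (m + m') + a * (s + s')" "x - y = (m - m') + a * (s - s')"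
    unfolding ms by (simp_all add: algebra_simps)
  moreover have "m + m' \<in> M" "m - m' \<in> M" using M ms unfolding ideal_of_def by auto
  moreover have "s + s' \<in> S" "s - s' \<in> S" using subring_closed[OF S] ms by auto
  ultimately show "x + y \<in> ?J" "x - y \<in> ?J" by blast+
next
  fix r x assume r: "r \<in> S" and "x \<in> ?J"
  then obtain m s where ms: "x = m + a * s" "m \<in> M" "s \<in> S" by blast
  have "r * x = r * m + a * (r * s)" unfolding ms by (simp add: algebra_simps)
  moreover have "r * m \<in> M" "r * s \<in> S"
    using ideal_of_mult[OF M r ms(2)] subring_closed[OF S r ms(3)] by auto
  ultimately show "r * x \<in> ?J" by blast
qed

lemma ideal_of_Union_chain:
  assumes "C \<noteq> {}" "\<And>I. I \<in> C \<Longrightarrow> ideal_of S I" "\<forall>I\<in>C. \<forall>J\<in>C. I \<subseteq> J \<or> J \<subseteq> I"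
  shows "ideal_of S (\<Union>C)"
  unfolding ideal_of_def
proof (intro conjI ballI)
  show "\<Union>C \<subseteq> S" using assms(2) ideal_of_subset by blast
  show "0 \<in> \<Union>C" using assms(1,2) ideal_of_0 by blast
next
  fix x y assume "x \<in> \<Union>C" "y \<in> \<Union>C"
  then obtain I where "I \<in> C" "x \<in> I" "y \<in> I" using assms(3) by blast
  then show "x + y \<in> \<Union>C" "x - y \<in> \<Union>C" using assms(2)[of I] unfolding ideal_of_def by auto
next
  fix a x assume "a \<in> S" "x \<in> \<Union>C"
  then show "a * x \<in> \<Union>C" using ideal_of_mult assms(2) by blast
qed

lemma prime_of_if_maximal:
  assumes S: "subring S" and M: "ideal_of S M" "1 \<notin> M"
    and max: "\<And>J. ideal_of S J \<Longrightarrow> M \<subseteq> J \<Longrightarrow> 1 \<notin> J \<Longrightarrow> J = M"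
  shows "prime_of S M"
proof -
  have unit: "\<exists>m s. 1 = m + a * s \<and> m \<in> M \<and> s \<in> S" if a: "a \<in> S" "a \<notin> M" for a
  proof (rule ccontr)
    let ?J = "{m + a * s | m s. m \<in> M \<and> s \<in> S}"
    assume "\<not> ?thesis"
    then have "1 \<notin> ?J" by blast
    moreover have "M \<subseteq> ?J"
    proof
      fix m assume "m \<in> M"
      moreover have "m = m + a * 0" by simp
      ultimately show "m \<in> ?J" using subring_0_1[OF S] by blast
    qed
    ultimately have "?J = M" using max ideal_of_adjoin[OF S M(1) a(1)] by blast
    moreover have "a \<in> ?J"
    proof -
      have "a = 0 + a * 1" by simp
      then show ?thesis using ideal_of_0[OF M(1)] subring_0_1[OF S] by blast
    qed
    ultimately show False using a by blast
  qed
  have "a \<in> M \<or> b \<in> M" if ab: "a \<in> S" "b \<in> S" "a * b \<in> M" for a b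
  proof (rule ccontr)
    assume "\<not> ?thesis"
    then obtain m1 s1 m2 s2 where 1: "1 = m1 + a * s1" "m1 \<in> M" "s1 \<in> S"
      and 2: "1 = m2 + b * s2" "m2 \<in> M" "s2 \<in> S"
      using unit ab by meson
    have "(1::'a) = (m1 + a * s1) * (m2 + b * s2)" using 1 2 by simp
    also have "\<dots> = m2 * m1 + (b * s2) * m1 + (a * s1) * m2 + (s1 * s2) * (a * b)"
      by (simp add: algebra_simps)
    also have "\<dots> \<in> M"
      using ideal_of_mult[OF M(1)] ideal_of_add[OF M(1)] ideal_of_subset[OF M(1)]
        subring_closed(3)[OF S] ab 1 2 by (simp add: subset_iff)
    finally show False using M(2) by blast
  qed
  moreover have "M \<noteq> S" using M(2) subring_0_1[OF S] by blast
  ultimately show ?thesis unfolding prime_of_def using M(1) by blast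
qed

lemma obtain_prime_of_superset:
  assumes S: "subring S" and I: "ideal_of S I" and one: "1 \<notin> I"
  obtains M where "prime_of S M" "I \<subseteq> M"
proof -
  define \<A> where "\<A> = {J. ideal_of S J \<and> I \<subseteq> J \<and> 1 \<notin> J}"
  have "\<Union>C \<in> \<A>" if C: "C \<noteq> {}" "subset.chain \<A> C" for C
    using C ideal_of_Union_chain[OF C(1), of S] unfolding \<A>_def subset.chain_def by blast
  then obtain M where M: "M \<in> \<A>" and max: "\<forall>J\<in>\<A>. M \<subseteq> J \<longrightarrow> J = M"
    using subset_Zorn_nonempty[of \<A>] I one unfolding \<A>_def by blast
  have "prime_of S M"
    using prime_of_if_maximal[OF S] M max unfolding \<A>_def by blast
  then show ?thesis using that M unfolding \<A>_def by blast
qed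

lemma ideal_of_Inter:
  assumes "F \<noteq> {}" "\<And>I. I \<in> F \<Longrightarrow> ideal_of S I"
  shows "ideal_of S (\<Inter>F)"
  using assms unfolding ideal_of_def by blast

lemma ideal_of_gen_ideal:
  assumes "subring S" "X \<subseteq> S"
  shows "ideal_of S (gen_ideal S X)"
  unfolding gen_ideal_def
  using ideal_of_whole[OF assms(1)] assms(2) by (intro ideal_of_Inter) auto

lemma subset_gen_ideal: "X \<subseteq> gen_ideal S X"
  unfolding gen_ideal_def by blast

lemma gen_ideal_least: "ideal_of S I \<Longrightarrow> X \<subseteq> I \<Longrightarrow> gen_ideal S X \<subseteq> I"
  unfolding gen_ideal_def by blast

lemma contraction_image_Spec1:
  assumes R: "subring R" and "R1 R" and ov: "overring R S" and gd: "going_down R S"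
  shows "(\<lambda>Q. Q \<inter> R) ` Spec1 S = {p \<in> Spec1 R. gen_ideal S p \<noteq> S}"
proof -
  have S: "subring S" and RS: "R \<subseteq> S" using ov unfolding overring_def by auto
  show ?thesis
  proof (intro equalityI subsetI)
    fix p assume "p \<in> (\<lambda>Q. Q \<inter> R) ` Spec1 S"
    then obtain Q where Q: "height_one_prime S Q" and p: "p = Q \<inter> R" unfolding Spec1_def by blast
    have Qp: "prime_of S Q" using Q unfolding height_one_prime_def by blast
    have "gen_ideal S p \<subseteq> Q" using gen_ideal_least[OF prime_of_ideal[OF Qp]] p by blast
    then have "gen_ideal S p \<noteq> S" using prime_of_one_notin[OF S Qp] subring_0_1[OF S] by blast
    then show "p \<in> {p \<in> Spec1 R. gen_ideal S p \<noteq> S}"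
      using height_one_contraction_if_going_down[OF R ov gd Q] p unfolding Spec1_def by blast
  next
    fix p assume "p \<in> {p \<in> Spec1 R. gen_ideal S p \<noteq> S}"
    then have hp: "height_one_prime R p" and proper: "gen_ideal S p \<noteq> S" unfolding Spec1_def by auto
    have pp: "prime_of R p" using hp unfolding height_one_prime_def by blast
    have "p \<subseteq> S" using ideal_of_subset[OF prime_of_ideal[OF pp]] RS by blast
    then have pS: "ideal_of S (gen_ideal S p)" using ideal_of_gen_ideal[OF S] by blast
    then have "1 \<notin> gen_ideal S p" using ideal_of_eq_if_one_mem proper by blast
    then obtain M where M: "prime_of S M" "gen_ideal S p \<subseteq> M"
      using obtain_prime_of_superset[OF S pS] by blast
    have "p \<subseteq> M \<inter> R" using M(2) subset_gen_ideal[of p S] ideal_of_subset[OF prime_of_ideal[OF pp]]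
      by blast
    then obtain P where P: "prime_of S P" "P \<inter> R = p"
      using gd pp prime_of_contraction[OF R S RS M(1)] M(1) unfolding going_down_def by blast
    then have "height_one_prime S P"
      using height_one_prime_if_height_one_contraction[OF R \<open>R1 R\<close> ov] hp by blast
    then show "p \<in> (\<lambda>Q. Q \<inter> R) ` Spec1 S" using P(2) unfolding Spec1_def by blast
  qed
qed

theorem proposition3p9:
  fixes R S :: "'k::field set"
  assumes "subring R" and "R1 R"
    and "overring R S" and "going_down R S"
  shows "R1 S \<and> (\<forall>Q \<in> Spec1 S. Q \<inter> R \<in> Spec1 R) \<and>
         inj_on (\<lambda>Q. Q \<inter> R) (Spec1 S) \<and>
         (\<lambda>Q. Q \<inter> R) ` Spec1 S = {p \<in> Spec1 R. gen_ideal S p \<noteq> S}"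
proof (intro conjI)
  have contraction: "height_one_prime R (Q \<inter> R)" if "Q \<in> Spec1 S" for Q
    using height_one_contraction_if_going_down[OF assms(1,3,4)] that unfolding Spec1_def by blast
  have prime: "prime_of S Q" if "Q \<in> Spec1 S" for Q
    using that unfolding Spec1_def height_one_prime_def by blast
  show "R1 S"
    unfolding R1_def
    using valuation_localization_if_height_one_contraction[OF assms(1-3)] contraction prime
    unfolding Spec1_def by blast
  show "\<forall>Q \<in> Spec1 S. Q \<inter> R \<in> Spec1 R" using contraction unfolding Spec1_def by blast
  show "inj_on (\<lambda>Q. Q \<inter> R) (Spec1 S)"
    using prime_eq_if_height_one_contraction_eq[OF assms(1-3)] contraction prime
    by (intro inj_onI) blast
  show "(\<lambda>Q. Q \<inter> R) ` Spec1 S = {p \<in> Spec1 R. gen_ideal S p \<noteq> S}"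
    using contraction_image_Spec1[OF assms] .
qed

end
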